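(* Assume $D(0)<\infty$. Then for all integers $x\ge1$, $$\mathbb P(x\in C_w)=\frac{1}{p_xD(x-1)},$$ and for all integers $1\le x<y$, $$\mathbb P(x\in C_w,\ y\in C_w)=\frac{1}{p_xD(x-1,y)}\cdot\frac{1}{1-\frac{q_yD(x-1,y-1)}{D(x-1,y)}}\cdot\frac1{D(y-1)}.$$
   Context: Let $p_0=1$, $q_0=0$, and for $k\ge1$ let $p_k,q_k>0$ with $p_k+q_k=1$. Let $X=(X_k)_{k\ge0}$ be the Markov chain on $\mathbb Z_+$ with $X_0=0$, $\mathbb P(X_{k+1}=n+1\mid X_k=n)=p_n$, $\mathbb P(X_{k+1}=n-1\mid X_k=n)=q_n$. Let $\rho_k=q_k/p_k$ for $k\ge1$. For integers $n\ge m\ge0$ let $D(m,n)=0$ if $n=m$, $D(m,n)=1$ if $n=m+1$, and $D(m,n)=1+\sum_{j=1}^{n-m-1}\rho_{m+1}\cdots\rho_{m+j}$ if $n\ge m+2$; let $D(m)=\lim_{n\to\infty}D(m,n)$. A site $R$ is a weak cutpoint if for some $k$, $X_k=R$, $X_i\le R$ for $0\le i\le k-1$ and $X_i\ge R$ for all $i\ge k+1$; $C_w$ is the set of weak cutpoints. *)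

theory Defs
  imports "HOL-Probability.Probability"
begin

text \<open>Birth-death chain on the nonnegative integers. p n is the probability of
stepping up from n; q n = 1 - p n is the probability of stepping down.\<close>

definition qq :: "(nat \<Rightarrow> real) \<Rightarrow> nat \<Rightarrow> real" where
  "qq p n = 1 - p n"

definition rho :: "(nat \<Rightarrow> real) \<Rightarrow> nat \<Rightarrow> real" where
  "rho p k = qq p k / p k"

definition trans_prob :: "(nat \<Rightarrow> real) \<Rightarrow> nat \<Rightarrow> nat \<Rightarrow> real" where
  "trans_prob p n m =
     (if m = Suc n then p n else if 0 < n \<and> m = n - 1 then qq p n else 0)"

definition path_prob :: "(nat \<Rightarrow> real) \<Rightarrow> nat list \<Rightarrow> real" where
  "path_prob p xs = (\<Prod>i < length xs - 1. trans_prob p (xs ! i) (xs ! Suc i))"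

text \<open>X is the Markov chain started at 0: its finite-dimensional distributions
are those of the chain.\<close>
definition is_bd_chain :: "'a measure \<Rightarrow> (nat \<Rightarrow> 'a \<Rightarrow> nat) \<Rightarrow> (nat \<Rightarrow> real) \<Rightarrow> bool" where
  "is_bd_chain M X p \<longleftrightarrow>
     prob_space M \<and>
     (\<forall>k. X k \<in> measurable M (count_space UNIV)) \<and>
     (\<forall>xs. xs \<noteq> [] \<longrightarrow>
        measure M {\<omega> \<in> space M. \<forall>i < length xs. X i \<omega> = xs ! i}
          = (if xs ! 0 = 0 then path_prob p xs else 0))"

definition Dfin :: "(nat \<Rightarrow> real) \<Rightarrow> nat \<Rightarrow> nat \<Rightarrow> real" where
  "Dfin p m n =
     (if n = m then 0
      else 1 + (\<Sum>j = 1 .. n - m - 1. \<Prod>i = 1 .. j. rho p (m + i)))"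

definition Dinf :: "(nat \<Rightarrow> real) \<Rightarrow> nat \<Rightarrow> real" where
  "Dinf p m = lim (\<lambda>n. Dfin p m n)"

definition weak_cutpoint :: "(nat \<Rightarrow> 'a \<Rightarrow> nat) \<Rightarrow> nat \<Rightarrow> 'a \<Rightarrow> bool" where
  "weak_cutpoint X R \<omega> \<longleftrightarrow>
     (\<exists>k. X k \<omega> = R \<and> (\<forall>i < k. X i \<omega> \<le> R) \<and> (\<forall>i > k. X i \<omega> \<ge> R))"

end

theory Submission
  imports Defs
begin

text \<open>
  Write the paths of the chain as sequences of up/down steps. Every event of the first n steps
  then has a probability given by a finite sum, and both the probability of staying in a set of
  states and the expectation of a function at the walk stopped on leaving that set satisfy simple
  recursions in n.

  A weak cutpoint x \<ge> 1 is reached at a unique time k at which the walk has stayed in {..x},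
  sits at x, steps to x + 1 and never returns below x. By the Markov property the probability of
  this is P(stay in {..x} up to k and sit at x at time k) times p x times the probability that the
  walk started at x + 1 stays in {x..} forever. Summed over k the first two factors give 1: a
  Lyapunov function with unit drift shows that {..x} is left almost surely, necessarily through
  x \<rightarrow> x + 1. Optional stopping for the harmonic function D(x - 1, \<cdot>) gives the last factor
  D(x - 1, x + 1) / D(x - 1) = 1 / (p x D(x - 1)). For cutpoints x < y the walk started at x + 1
  must in between leave {x..y} at the top, which by the same argument has probability
  D(x - 1, x + 1) / D(x - 1, y + 1); rearranging gives the stated formula.
\<close>

section \<open>Walks as sequences of up/down steps\<close>

text \<open>A down step at 0 is a junk move back to 0; it gets probability 0 because p 0 = 1.\<close>

definition walk_step :: "nat \<Rightarrow> bool \<Rightarrow> nat" where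
  "walk_step a up = (if up then Suc a else a - 1)"

definition step_prob :: "(nat \<Rightarrow> real) \<Rightarrow> nat \<Rightarrow> bool \<Rightarrow> real" where
  "step_prob p a up = (if up then p a else if 0 < a then qq p a else 0)"

definition walk_pos :: "nat \<Rightarrow> bool list \<Rightarrow> nat \<Rightarrow> nat" where
  "walk_pos a bs i = foldl walk_step a (take i bs)"

fun walk_weight :: "(nat \<Rightarrow> real) \<Rightarrow> nat \<Rightarrow> bool list \<Rightarrow> real" where
  "walk_weight p a [] = 1"
| "walk_weight p a (b # bs) = step_prob p a b * walk_weight p (walk_step a b) bs"

definition step_seqs :: "nat \<Rightarrow> bool list set" where
  "step_seqs n = {bs. length bs = n}"

definition event_prob :: "(nat \<Rightarrow> real) \<Rightarrow> nat \<Rightarrow> nat \<Rightarrow> ((nat \<Rightarrow> nat) \<Rightarrow> bool) \<Rightarrow> real" where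
  "event_prob p n a \<Phi> = (\<Sum>bs\<in>step_seqs n. walk_weight p a bs * (if \<Phi> (walk_pos a bs) then 1 else 0))"

lemma finite_step_seqs [simp]: "finite (step_seqs n)"
  unfolding step_seqs_def using finite_lists_length_eq[of "UNIV :: bool set" n] by simp

lemma step_seqs_0: "step_seqs 0 = {[]}"
  by (auto simp: step_seqs_def)

lemma step_seqs_1: "step_seqs (Suc 0) = {[True], [False]}"
  by (auto simp: step_seqs_def length_Suc_conv)

lemma walk_pos_0 [simp]: "walk_pos a bs 0 = a"
  by (simp add: walk_pos_def)

lemma walk_pos_Cons_Suc [simp]: "walk_pos a (b # bs) (Suc i) = walk_pos (walk_step a b) bs i"
  by (simp add: walk_pos_def)

lemma walk_pos_append: "walk_pos a (bs @ cs) i = walk_pos (walk_pos a bs i) cs (i - length bs)"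
  by (simp add: walk_pos_def)

lemma walk_pos_Suc: "i < length bs \<Longrightarrow> walk_pos a bs (Suc i) = walk_step (walk_pos a bs i) (bs ! i)"
  by (simp add: walk_pos_def take_Suc_conv_app_nth)

lemma walk_pos_ge_length: "length bs \<le> i \<Longrightarrow> walk_pos a bs i = walk_pos a bs (length bs)"
  by (simp add: walk_pos_def)

lemma walk_pos_inj:
  assumes "length bs = length cs" "\<forall>i\<le>length bs. walk_pos a bs i = walk_pos a cs i"
  shows "bs = cs"
  using assms
proof (induction bs arbitrary: a cs)
  case (Cons b bs)
  then obtain c cs' where cs: "cs = c # cs'" by (cases cs) auto
  have "walk_pos a (b # bs) 1 = walk_pos a (c # cs') 1" using Cons.prems cs by auto
  then have "b = c" by (cases b; cases c) (auto simp: walk_pos_def walk_step_def)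
  moreover have "\<forall>i\<le>length bs. walk_pos (walk_step a b) bs i = walk_pos (walk_step a b) cs' i"
  proof (intro allI impI)
    fix i assume "i \<le> length bs"
    then have "walk_pos a (b # bs) (Suc i) = walk_pos a (c # cs') (Suc i)" using Cons.prems cs by auto
    then show "walk_pos (walk_step a b) bs i = walk_pos (walk_step a b) cs' i" using \<open>b = c\<close> by simp
  qed
  ultimately show ?case using Cons.IH[of cs' "walk_step a b"] Cons.prems cs by simp
qed simp

lemma walk_weight_append:
  "walk_weight p a (bs @ cs) = walk_weight p a bs * walk_weight p (walk_pos a bs (length bs)) cs"
  by (induction bs arbitrary: a) (auto simp: walk_pos_def)

lemma walk_weight_eq_prod:
  "walk_weight p a bs = (\<Prod>i<length bs. step_prob p (walk_pos a bs i) (bs ! i))"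
proof (induction bs arbitrary: a)
  case (Cons b bs)
  then show ?case by (simp only: length_Cons prod.lessThan_Suc_shift) simp
qed simp

lemma sum_step_seqs_add:
  "(\<Sum>bs\<in>step_seqs (n + m). g bs) = (\<Sum>bs\<in>step_seqs n. \<Sum>cs\<in>step_seqs m. g (bs @ cs))"
proof -
  have inj: "inj_on (\<lambda>(bs, cs). bs @ cs) (step_seqs n \<times> step_seqs m)"
    by (auto simp: inj_on_def step_seqs_def)
  have img: "(\<lambda>(bs, cs). bs @ cs) ` (step_seqs n \<times> step_seqs m) = step_seqs (n + m)"
  proof (intro equalityI subsetI)
    fix ds assume "ds \<in> step_seqs (n + m)"
    then have "(take n ds, drop n ds) \<in> step_seqs n \<times> step_seqs m" by (auto simp: step_seqs_def)
    then show "ds \<in> (\<lambda>(bs, cs). bs @ cs) ` (step_seqs n \<times> step_seqs m)"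
      by (metis (no_types, lifting) append_take_drop_id case_prod_conv image_eqI)
  qed (auto simp: step_seqs_def)
  have "(\<Sum>ds\<in>step_seqs (n + m). g ds) = (\<Sum>x\<in>step_seqs n \<times> step_seqs m. g ((\<lambda>(bs, cs). bs @ cs) x))"
    using sum.reindex[OF inj, of g] img by simp
  also have "\<dots> = (\<Sum>bs\<in>step_seqs n. \<Sum>cs\<in>step_seqs m. g (bs @ cs))"
    by (simp add: sum.cartesian_product case_prod_beta)
  finally show ?thesis .
qed

lemma sum_step_seqs_Suc:
  "(\<Sum>bs\<in>step_seqs (Suc n). g bs) = (\<Sum>bs\<in>step_seqs n. g (True # bs) + g (False # bs))"
  using sum_step_seqs_add[where n=1 and m=n and g=g] by (simp add: step_seqs_1 sum.distrib[symmetric])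

section \<open>Staying probabilities and stopped expectations\<close>

fun stay_prob :: "(nat \<Rightarrow> real) \<Rightarrow> nat set \<Rightarrow> nat set \<Rightarrow> nat \<Rightarrow> nat \<Rightarrow> real" where
  "stay_prob p I J 0 a = (if a \<in> I \<and> a \<in> J then 1 else 0)"
| "stay_prob p I J (Suc n) a =
    (if a \<in> I then step_prob p a True * stay_prob p I J n (Suc a)
                   + step_prob p a False * stay_prob p I J n (a - 1) else 0)"

text \<open>The expectation of g at the walk stopped on leaving I, after n steps.\<close>

fun stopped_expect :: "(nat \<Rightarrow> real) \<Rightarrow> nat set \<Rightarrow> (nat \<Rightarrow> real) \<Rightarrow> nat \<Rightarrow> nat \<Rightarrow> real" where
  "stopped_expect p I g 0 a = g a"
| "stopped_expect p I g (Suc n) a =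
    (if a \<in> I then step_prob p a True * stopped_expect p I g n (Suc a)
                   + step_prob p a False * stopped_expect p I g n (a - 1) else g a)"

lemma stay_prob_Suc_in:
  "a \<in> I \<Longrightarrow> stay_prob p I J (Suc n) a
     = step_prob p a True * stay_prob p I J n (Suc a) + step_prob p a False * stay_prob p I J n (a - 1)"
  by simp

lemma stay_prob_Suc_out: "a \<notin> I \<Longrightarrow> stay_prob p I J (Suc n) a = 0"
  by simp

lemma stopped_expect_Suc_in:
  "a \<in> I \<Longrightarrow> stopped_expect p I g (Suc n) a
     = step_prob p a True * stopped_expect p I g n (Suc a) + step_prob p a False * stopped_expect p I g n (a - 1)"
  by simp

lemma stopped_expect_Suc_out: "a \<notin> I \<Longrightarrow> stopped_expect p I g (Suc n) a = g a"
  by simp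

declare stay_prob.simps(2) [simp del] stopped_expect.simps(2) [simp del]

lemma stopped_expect_cmult: "stopped_expect p I (\<lambda>a. c * g a) n a = c * stopped_expect p I g n a"
  by (induction n arbitrary: a) (auto simp: algebra_simps stopped_expect.simps(2))

lemma stopped_expect_decompose:
  assumes "finite I"
  shows "stopped_expect p I g n a
     = (\<Sum>b\<in>I. g b * stay_prob p I {b} n a) + stopped_expect p I (\<lambda>b. if b \<in> I then 0 else g b) n a"
proof (induction n arbitrary: a)
  case 0
  have "(\<Sum>b\<in>I. g b * stay_prob p I {b} 0 a) = (\<Sum>b\<in>I. if a = b then g b else 0)"
    by (rule sum.cong) auto
  then show ?case using assms by (simp add: sum.delta)
next
  case (Suc n)
  show ?case
  proof (cases "a \<in> I")
    case True
    let ?S = "\<lambda>c. \<Sum>b\<in>I. g b * stay_prob p I {b} n c"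
    have "(\<Sum>b\<in>I. g b * stay_prob p I {b} (Suc n) a)
        = step_prob p a True * ?S (Suc a) + step_prob p a False * ?S (a - 1)"
      using True by (simp add: stay_prob_Suc_in sum.distrib sum_distrib_left algebra_simps)
    then show ?thesis
      using True by (simp add: stopped_expect_Suc_in Suc distrib_left)
  qed (simp add: stay_prob_Suc_out stopped_expect_Suc_out)
qed

locale birth_death_walk =
  fixes p :: "nat \<Rightarrow> real"
  assumes p0: "p 0 = 1"
    and ppos: "\<And>k. k \<ge> 1 \<Longrightarrow> 0 < p k \<and> p k < 1"
begin

lemma p_pos: "0 < p k"
  using p0 ppos[of k] by (cases k) auto

lemma p_le_1: "p k \<le> 1"
  using p0 ppos[of k] by (cases k) auto

lemma step_prob_nonneg: "0 \<le> step_prob p a b"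
  using p_pos[of a] p_le_1[of a] by (auto simp: step_prob_def qq_def)

lemma step_prob_up_down: "step_prob p a True + step_prob p a False = 1"
  using p0 by (cases a) (auto simp: step_prob_def qq_def)

lemma sum_walk_weight: "(\<Sum>bs\<in>step_seqs n. walk_weight p a bs) = 1"
proof (induction n arbitrary: a)
  case (Suc n)
  have "(\<Sum>bs\<in>step_seqs (Suc n). walk_weight p a bs)
      = step_prob p a True * (\<Sum>bs\<in>step_seqs n. walk_weight p (Suc a) bs)
        + step_prob p a False * (\<Sum>bs\<in>step_seqs n. walk_weight p (a - 1) bs)"
    by (simp add: sum_step_seqs_Suc walk_step_def sum.distrib sum_distrib_left)
  then show ?case using step_prob_up_down by (simp add: Suc)
qed (simp add: step_seqs_0)

lemma event_prob_concat:
  assumes dep: "\<And>f g. \<forall>i\<le>n. f i = g i \<Longrightarrow> \<Phi> f = \<Phi> g"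
    and pos: "\<And>f. \<Phi> f \<Longrightarrow> f n = c"
  shows "event_prob p (n + m) a (\<lambda>f. \<Phi> f \<and> \<Psi> (\<lambda>i. f (n + i)))
       = event_prob p n a \<Phi> * event_prob p m c \<Psi>"
proof -
  have eq: "walk_weight p a (bs @ cs) * (if \<Phi> (walk_pos a (bs @ cs)) \<and> \<Psi> (\<lambda>i. walk_pos a (bs @ cs) (n + i)) then 1 else 0)
      = walk_weight p a bs * (if \<Phi> (walk_pos a bs) then 1 else 0)
        * (walk_weight p c cs * (if \<Psi> (walk_pos c cs) then 1 else 0))"
    if "bs \<in> step_seqs n" for bs cs
  proof -
    have len: "length bs = n" using that by (simp add: step_seqs_def)
    have "\<Phi> (walk_pos a (bs @ cs)) = \<Phi> (walk_pos a bs)"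
      by (rule dep) (simp add: walk_pos_append len)
    moreover have "(\<lambda>i. walk_pos a (bs @ cs) (n + i)) = walk_pos (walk_pos a bs n) cs"
      by (rule ext) (simp add: walk_pos_append len walk_pos_ge_length[of bs "n + _"])
    moreover have "\<Phi> (walk_pos a bs) \<Longrightarrow> walk_pos a bs n = c"
      by (rule pos)
    ultimately show ?thesis by (auto simp: walk_weight_append len)
  qed
  then show ?thesis
    unfolding event_prob_def sum_step_seqs_add sum_product by (intro sum.cong) auto
qed

lemma all_le_Suc_iff: "(\<forall>i\<le>Suc n. P i) \<longleftrightarrow> P 0 \<and> (\<forall>i\<le>n. P (Suc i))"
  by (metis Suc_le_D Suc_le_mono le0 not0_implies_Suc)

lemma event_prob_stay: "event_prob p n a (\<lambda>f. (\<forall>i\<le>n. f i \<in> I) \<and> f n \<in> J) = stay_prob p I J n a"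
proof (induction n arbitrary: a)
  case (Suc n)
  have up: "(\<forall>i\<le>Suc n. walk_pos a (True # bs) i \<in> I) \<longleftrightarrow> a \<in> I \<and> (\<forall>i\<le>n. walk_pos (Suc a) bs i \<in> I)"
    and down: "(\<forall>i\<le>Suc n. walk_pos a (False # bs) i \<in> I) \<longleftrightarrow> a \<in> I \<and> (\<forall>i\<le>n. walk_pos (a - 1) bs i \<in> I)"
    for bs by (simp_all add: all_le_Suc_iff walk_step_def)
  show ?case
    using Suc[of "Suc a"] Suc[of "a - 1"]
    by (cases "a \<in> I")
       (simp_all add: event_prob_def sum_step_seqs_Suc walk_step_def up down stay_prob.simps(2)
         sum.distrib mult.assoc flip: sum_distrib_left)
qed (simp add: event_prob_def step_seqs_0)

lemma event_prob_stay_UNIV: "event_prob p n a (\<lambda>f. \<forall>i\<le>n. f i \<in> I) = stay_prob p I UNIV n a"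
  using event_prob_stay[of n a I UNIV] by simp

lemma event_prob_leaves_up:
  "event_prob p (Suc k) a (\<lambda>f. (\<forall>i\<le>k. f i \<in> I) \<and> f k = b \<and> f (Suc k) = Suc b)
     = stay_prob p I {b} k a * p b"
proof -
  let ?stay = "\<lambda>f. (\<forall>i\<le>k. f i \<in> I) \<and> f k \<in> {b}"
  let ?up = "\<lambda>g. g 1 = Suc b"
  have eq: "(\<lambda>f. (\<forall>i\<le>k. f i \<in> I) \<and> f k = b \<and> f (Suc k) = Suc b) = (\<lambda>f. ?stay f \<and> ?up (\<lambda>i. f (k + i)))"
    by auto
  have "event_prob p (k + 1) a (\<lambda>f. ?stay f \<and> ?up (\<lambda>i. f (k + i))) = event_prob p k a ?stay * event_prob p 1 b ?up"
    by (rule event_prob_concat) auto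
  moreover have "event_prob p 1 b ?up = p b"
    by (simp add: event_prob_def step_seqs_1 walk_pos_def walk_step_def step_prob_def)
  ultimately show ?thesis
    unfolding eq by (simp only: Suc_eq_plus1[symmetric] event_prob_stay)
qed

lemma stay_prob_nonneg: "0 \<le> stay_prob p I J n a"
  by (induction n arbitrary: a)
     (auto simp: stay_prob.simps(2) intro!: add_nonneg_nonneg mult_nonneg_nonneg step_prob_nonneg)

lemma stay_prob_le_1: "stay_prob p I J n a \<le> 1"
proof (induction n arbitrary: a)
  case (Suc n)
  have "step_prob p a True * stay_prob p I J n (Suc a) + step_prob p a False * stay_prob p I J n (a - 1)
      \<le> step_prob p a True * 1 + step_prob p a False * 1"
    by (intro add_mono mult_left_mono Suc step_prob_nonneg)
  then show ?case using step_prob_up_down by (simp add: stay_prob.simps(2))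
qed simp

lemma stay_prob_mono: "I \<subseteq> I' \<Longrightarrow> J \<subseteq> J' \<Longrightarrow> stay_prob p I J n a \<le> stay_prob p I' J' n a"
proof (induction n arbitrary: a)
  case (Suc n)
  show ?case
  proof (cases "a \<in> I")
    case True
    have "step_prob p a True * stay_prob p I J n (Suc a) + step_prob p a False * stay_prob p I J n (a - 1)
        \<le> step_prob p a True * stay_prob p I' J' n (Suc a) + step_prob p a False * stay_prob p I' J' n (a - 1)"
      using Suc by (intro add_mono mult_left_mono step_prob_nonneg) auto
    then show ?thesis using True Suc.prems by (auto simp: stay_prob_Suc_in)
  qed (simp add: stay_prob_Suc_out stay_prob_nonneg)
qed auto

lemma stay_prob_Suc_le: "stay_prob p I UNIV (Suc n) a \<le> stay_prob p I UNIV n a"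
proof (induction n arbitrary: a)
  case 0
  have "step_prob p a True * stay_prob p I UNIV 0 (Suc a) + step_prob p a False * stay_prob p I UNIV 0 (a - 1)
      \<le> step_prob p a True * 1 + step_prob p a False * 1"
    by (intro add_mono mult_left_mono stay_prob_le_1 step_prob_nonneg)
  then show ?case using step_prob_up_down by (simp add: stay_prob.simps(2))
next
  case (Suc n)
  show ?case
  proof (cases "a \<in> I")
    case True
    have "step_prob p a True * stay_prob p I UNIV (Suc n) (Suc a) + step_prob p a False * stay_prob p I UNIV (Suc n) (a - 1)
        \<le> step_prob p a True * stay_prob p I UNIV n (Suc a) + step_prob p a False * stay_prob p I UNIV n (a - 1)"
      by (intro add_mono mult_left_mono Suc step_prob_nonneg)
    then show ?thesis using True by (simp only: stay_prob_Suc_in)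
  qed (simp add: stay_prob_Suc_out)
qed

lemma stay_prob_antimono: "m \<le> n \<Longrightarrow> stay_prob p I UNIV n a \<le> stay_prob p I UNIV m a"
  by (induction n rule: dec_induct) (auto intro: order_trans[OF stay_prob_Suc_le])

lemma sum_stay_prob_singletons:
  assumes "finite I"
  shows "(\<Sum>b\<in>I. stay_prob p I {b} n a) = stay_prob p I UNIV n a"
proof (induction n arbitrary: a)
  case 0
  show ?case using assms by (simp add: sum.If_cases)
next
  case (Suc n)
  show ?case
    by (cases "a \<in> I")
       (simp_all add: stay_prob_Suc_in stay_prob_Suc_out sum.distrib sum_distrib_left[symmetric] Suc)
qed

lemma stopped_expect_harmonic:
  assumes "\<And>a. a \<in> I \<Longrightarrow> step_prob p a True * g (Suc a) + step_prob p a False * g (a - 1) = g a"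
  shows "stopped_expect p I g n a = g a"
proof (induction n arbitrary: a)
  case (Suc n)
  show ?case
    using assms[of a] by (cases "a \<in> I") (simp_all add: stopped_expect_Suc_in stopped_expect_Suc_out Suc)
qed simp

lemma stopped_expect_le_stay_prob:
  assumes "\<And>a. a \<in> I \<Longrightarrow> g a \<le> c" "\<And>a. a \<notin> I \<Longrightarrow> g a \<le> 0" "0 \<le> c"
  shows "stopped_expect p I g n a \<le> c * stay_prob p I UNIV n a"
proof (induction n arbitrary: a)
  case (Suc n)
  show ?case
  proof (cases "a \<in> I")
    case True
    have "step_prob p a True * stopped_expect p I g n (Suc a) + step_prob p a False * stopped_expect p I g n (a - 1)
        \<le> step_prob p a True * (c * stay_prob p I UNIV n (Suc a)) + step_prob p a False * (c * stay_prob p I UNIV n (a - 1))"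
      by (intro add_mono mult_left_mono Suc step_prob_nonneg)
    then show ?thesis using True by (simp add: algebra_simps stopped_expect_Suc_in stay_prob_Suc_in)
  qed (use assms in \<open>simp add: stopped_expect_Suc_out stay_prob_Suc_out\<close>)
qed (use assms in auto)

lemma stopped_expect_mono:
  assumes "\<And>a. g a \<le> h a"
  shows "stopped_expect p I g n a \<le> stopped_expect p I h n a"
proof (induction n arbitrary: a)
  case (Suc n)
  show ?case
    by (cases "a \<in> I")
       (auto simp: assms stopped_expect_Suc_in stopped_expect_Suc_out intro!: add_mono mult_left_mono step_prob_nonneg Suc)
qed (simp add: assms)

lemma stopped_expect_nonneg: "(\<And>a. 0 \<le> g a) \<Longrightarrow> 0 \<le> stopped_expect p I g n a"
  using stopped_expect_mono[of "\<lambda>_. 0" g I n a] stopped_expect_cmult[where c=0 and g=g] by simp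

text \<open>Staying in {x..} either means staying in {x..hi} or exiting that interval at the top.\<close>

lemma stay_prob_atLeast_le_exit:
  assumes "x \<le> Suc hi"
  shows "stay_prob p {x..} UNIV n a
     \<le> stopped_expect p {x..hi} (\<lambda>b. if hi < b then 1 else 0) n a + stay_prob p {x..hi} UNIV n a"
proof (induction n arbitrary: a)
  case (Suc n)
  let ?E = "stopped_expect p {x..hi} (\<lambda>b. if hi < b then 1 else 0) n"
  show ?case
  proof (cases "x \<le> a \<and> a \<le> hi")
    case True
    have "step_prob p a True * stay_prob p {x..} UNIV n (Suc a) + step_prob p a False * stay_prob p {x..} UNIV n (a - 1)
      \<le> step_prob p a True * (?E (Suc a) + stay_prob p {x..hi} UNIV n (Suc a))
        + step_prob p a False * (?E (a - 1) + stay_prob p {x..hi} UNIV n (a - 1))"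
      by (intro add_mono mult_left_mono Suc step_prob_nonneg)
    then show ?thesis using True by (simp add: algebra_simps stay_prob_Suc_in stopped_expect_Suc_in)
  next
    case out: False
    show ?thesis
    proof (cases "a < x")
      case True
      then show ?thesis
        by (auto simp: stay_prob_Suc_out intro!: add_nonneg_nonneg stopped_expect_nonneg stay_prob_nonneg)
    next
      case False
      then have "a \<notin> {x..hi}" "hi < a" using out by auto
      then show ?thesis
        using stay_prob_le_1[of "{x..}" UNIV "Suc n" a]
        by (simp add: stopped_expect_Suc_out stay_prob_Suc_out del: atLeastAtMost_iff)
    qed
  qed
qed auto

end

section \<open>Leaving bounded intervals\<close>

text \<open>A Lyapunov function with drift exactly 1 under one step of the walk. By optional stopping,
  the expected time the walk spends in {..h} is at most lyap p (Suc h), so it leaves {..h}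
  almost surely.\<close>

fun lyap_incr :: "(nat \<Rightarrow> real) \<Rightarrow> nat \<Rightarrow> real" where
  "lyap_incr p 0 = 1"
| "lyap_incr p (Suc a) = (1 + qq p (Suc a) * lyap_incr p a) / p (Suc a)"

definition lyap :: "(nat \<Rightarrow> real) \<Rightarrow> nat \<Rightarrow> real" where
  "lyap p a = (\<Sum>i<a. lyap_incr p i)"

context birth_death_walk
begin

lemma lyap_incr_pos: "0 < lyap_incr p a"
proof (induction a)
  case (Suc a)
  have "0 \<le> qq p (Suc a)" using p_le_1 by (simp add: qq_def)
  then show ?case using Suc p_pos[of "Suc a"]
    by (auto intro!: divide_pos_pos add_pos_nonneg mult_nonneg_nonneg)
qed simp

lemma lyap_nonneg: "0 \<le> lyap p a"
  unfolding lyap_def by (intro sum_nonneg less_imp_le lyap_incr_pos)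

lemma lyap_mono: "a \<le> b \<Longrightarrow> lyap p a \<le> lyap p b"
  unfolding lyap_def by (rule sum_mono2) (auto intro: less_imp_le lyap_incr_pos)

lemma lyap_drift: "step_prob p a True * lyap p (Suc a) + step_prob p a False * lyap p (a - 1) = lyap p a + 1"
proof (cases a)
  case 0
  then show ?thesis using p0 by (simp add: step_prob_def lyap_def)
next
  case (Suc b)
  have incr: "lyap_incr p a * p a = 1 + qq p a * lyap_incr p b" using Suc p_pos[of a] by simp
  have "step_prob p a True * lyap p (Suc a) + step_prob p a False * lyap p (a - 1)
      = p a * (lyap p a + lyap_incr p a) + qq p a * (lyap p a - lyap_incr p b)"
    using Suc by (simp add: step_prob_def lyap_def)
  also have "\<dots> = (p a + qq p a) * lyap p a + (lyap_incr p a * p a - qq p a * lyap_incr p b)"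
    by (simp add: algebra_simps)
  also have "\<dots> = lyap p a + 1"
    using incr by (simp add: qq_def)
  finally show ?thesis .
qed

lemma lyap_plus_occupation_le:
  "a \<le> Suc h \<Longrightarrow> lyap p a + (\<Sum>i<n. stay_prob p {..h} UNIV i a) \<le> stopped_expect p {..h} (lyap p) n a"
proof (induction n arbitrary: a)
  case (Suc n)
  show ?case
  proof (cases "a \<le> h")
    case True
    let ?occ = "\<lambda>c. \<Sum>i<n. stay_prob p {..h} UNIV i c"
    have "lyap p a + (\<Sum>i<Suc n. stay_prob p {..h} UNIV i a)
        = lyap p a + 1 + (step_prob p a True * ?occ (Suc a) + step_prob p a False * ?occ (a - 1))"
      using True
      by (simp only: sum.lessThan_Suc_shift) (simp add: sum.distrib sum_distrib_left stay_prob_Suc_in)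
    also have "\<dots> = step_prob p a True * (lyap p (Suc a) + ?occ (Suc a))
         + step_prob p a False * (lyap p (a - 1) + ?occ (a - 1))"
      using lyap_drift[of a] by (simp add: algebra_simps)
    also have "\<dots> \<le> step_prob p a True * stopped_expect p {..h} (lyap p) n (Suc a)
         + step_prob p a False * stopped_expect p {..h} (lyap p) n (a - 1)"
      using True by (intro add_mono mult_left_mono Suc step_prob_nonneg) auto
    finally show ?thesis using True by (simp add: stopped_expect_Suc_in)
  next
    case False
    then have "stay_prob p {..h} UNIV i a = 0" for i by (cases i) (auto simp: stay_prob_Suc_out)
    then show ?thesis using False by (simp add: stopped_expect_Suc_out)
  qed
qed simp

lemma stopped_expect_lyap_le: "a \<le> Suc h \<Longrightarrow> stopped_expect p {..h} (lyap p) n a \<le> lyap p (Suc h)"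
proof (induction n arbitrary: a)
  case (Suc n)
  show ?case
  proof (cases "a \<le> h")
    case True
    have "step_prob p a True * stopped_expect p {..h} (lyap p) n (Suc a)
          + step_prob p a False * stopped_expect p {..h} (lyap p) n (a - 1)
        \<le> step_prob p a True * lyap p (Suc h) + step_prob p a False * lyap p (Suc h)"
      using True by (intro add_mono mult_left_mono Suc step_prob_nonneg) auto
    also have "\<dots> = lyap p (Suc h)"
      by (metis distrib_right mult_1 step_prob_up_down)
    finally show ?thesis using True by (simp add: stopped_expect_Suc_in)
  next
    case False
    then show ?thesis using Suc.prems by (simp add: lyap_mono stopped_expect_Suc_out)
  qed
qed (simp add: lyap_mono)

lemma stay_prob_atMost_le: "real n * stay_prob p {..h} UNIV n a \<le> lyap p (Suc h)"
proof (cases "a \<le> Suc h")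
  case True
  have "real n * stay_prob p {..h} UNIV n a \<le> (\<Sum>i<n. stay_prob p {..h} UNIV i a)"
    using sum_mono[of "{..<n}" "\<lambda>_. stay_prob p {..h} UNIV n a" "\<lambda>i. stay_prob p {..h} UNIV i a"]
    by (simp add: stay_prob_antimono)
  also have "\<dots> \<le> lyap p (Suc h)"
    using lyap_plus_occupation_le[OF True, of n] stopped_expect_lyap_le[OF True, of n] lyap_nonneg[of a]
    by simp
  finally show ?thesis .
next
  case False
  then have "stay_prob p {..h} UNIV n a = 0" by (cases n) (auto simp: stay_prob_Suc_out)
  then show ?thesis by (simp add: lyap_nonneg)
qed

lemma stay_prob_atMost_tendsto_0: "(\<lambda>n. stay_prob p {..h} UNIV n a) \<longlonglongrightarrow> 0"
proof (rule tendsto_sandwich[where f = "\<lambda>_. 0" and h = "\<lambda>n. lyap p (Suc h) * (1 / real n)"])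
  show "\<forall>\<^sub>F n in sequentially. 0 \<le> stay_prob p {..h} UNIV n a"
    by (simp add: stay_prob_nonneg)
  show "\<forall>\<^sub>F n in sequentially. stay_prob p {..h} UNIV n a \<le> lyap p (Suc h) * (1 / real n)"
    using eventually_gt_at_top[of 0]
    by eventually_elim (use stay_prob_atMost_le[of _ h a] in \<open>simp add: field_simps\<close>)
  show "(\<lambda>n. lyap p (Suc h) * (1 / real n)) \<longlonglongrightarrow> 0"
    using tendsto_mult_right[OF lim_inverse_n', of "lyap p (Suc h)"] by simp
qed simp

lemma stay_prob_tendsto_0:
  assumes "I \<subseteq> {..h}"
  shows "(\<lambda>n. stay_prob p I J n a) \<longlonglongrightarrow> 0"
proof (rule tendsto_sandwich[where f = "\<lambda>_. 0" and h = "\<lambda>n. stay_prob p {..h} UNIV n a"])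
  show "\<forall>\<^sub>F n in sequentially. stay_prob p I J n a \<le> stay_prob p {..h} UNIV n a"
    using assms by (simp add: stay_prob_mono)
qed (simp_all add: stay_prob_nonneg stay_prob_atMost_tendsto_0)

end

section \<open>The scale function\<close>

definition rho_prod :: "(nat \<Rightarrow> real) \<Rightarrow> nat \<Rightarrow> real" where
  "rho_prod p k = (\<Prod>i\<in>{1..k}. rho p i)"

text \<open>The scale function of the walk, normalised to vanish up to m and to equal 1 at m + 1; on {m..}
  it is the paper's D(m, \<cdot>) (lemma Dfin_eq_walk_scale).\<close>

definition walk_scale :: "(nat \<Rightarrow> real) \<Rightarrow> nat \<Rightarrow> nat \<Rightarrow> real" where
  "walk_scale p m n = (\<Sum>j<n - m. rho_prod p (m + j) / rho_prod p m)"

context birth_death_walk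
begin

lemma rho_pos: "1 \<le> k \<Longrightarrow> 0 < rho p k"
  using ppos[of k] by (simp add: rho_def qq_def)

lemma rho_prod_pos: "0 < rho_prod p k"
  unfolding rho_prod_def by (rule prod_pos) (auto intro: rho_pos)

lemma rho_prod_Suc: "rho_prod p (Suc k) = rho_prod p k * rho p (Suc k)"
  unfolding rho_prod_def by (simp add: atLeastAtMostSuc_conv mult.commute)

lemma rho_prod_balance: "p (Suc k) * rho_prod p (Suc k) = qq p (Suc k) * rho_prod p k"
  using p_pos[of "Suc k"] by (simp add: rho_prod_Suc rho_def)

lemma rho_prod_add: "rho_prod p (m + j) = rho_prod p m * (\<Prod>i\<in>{1..j}. rho p (m + i))"
  by (induction j) (simp_all add: rho_prod_def rho_prod_Suc atLeastAtMostSuc_conv)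

lemma walk_scale_Suc: "m \<le> n \<Longrightarrow> walk_scale p m (Suc n) = walk_scale p m n + rho_prod p n / rho_prod p m"
  unfolding walk_scale_def by (simp add: Suc_diff_le)

lemma walk_scale_eq_0: "n \<le> m \<Longrightarrow> walk_scale p m n = 0"
  unfolding walk_scale_def by simp

lemma walk_scale_nonneg: "0 \<le> walk_scale p m n"
  unfolding walk_scale_def by (intro sum_nonneg divide_nonneg_pos less_imp_le rho_prod_pos)

lemma walk_scale_mono: "n \<le> n' \<Longrightarrow> walk_scale p m n \<le> walk_scale p m n'"
  unfolding walk_scale_def by (rule sum_mono2) (auto intro: divide_nonneg_pos less_imp_le rho_prod_pos)

lemma walk_scale_Suc_self: "walk_scale p m (Suc m) = 1"
  unfolding walk_scale_def using rho_prod_pos[of m] by simp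

lemma walk_scale_pos: "m < n \<Longrightarrow> 0 < walk_scale p m n"
  using walk_scale_mono[of "Suc m" n m] walk_scale_Suc_self[of m] by simp

lemma walk_scale_Suc_Suc_self: "walk_scale p m (Suc (Suc m)) = 1 / p (Suc m)"
proof -
  have "walk_scale p m (Suc (Suc m)) = 1 + rho p (Suc m)"
    using rho_prod_pos[of m] by (simp add: walk_scale_Suc walk_scale_Suc_self rho_prod_Suc)
  also have "\<dots> = 1 / p (Suc m)"
    using p_pos[of "Suc m"] by (simp add: rho_def qq_def field_simps)
  finally show ?thesis .
qed

lemma walk_scale_harmonic:
  assumes "m < a"
  shows "step_prob p a True * walk_scale p m (Suc a) + step_prob p a False * walk_scale p m (a - 1) = walk_scale p m a"
proof -
  obtain b where b: "a = Suc b" "m \<le> b" using assms by (cases a) auto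
  have "step_prob p a True * walk_scale p m (Suc a) + step_prob p a False * walk_scale p m (a - 1)
      = p a * (walk_scale p m a + rho_prod p a / rho_prod p m) + qq p a * (walk_scale p m a - rho_prod p b / rho_prod p m)"
    using b by (simp add: step_prob_def walk_scale_Suc)
  also have "\<dots> = (p a + qq p a) * walk_scale p m a + (p a * rho_prod p a - qq p a * rho_prod p b) / rho_prod p m"
    by (simp add: algebra_simps diff_divide_distrib)
  also have "\<dots> = walk_scale p m a"
    using rho_prod_balance[of b] b by (simp add: qq_def)
  finally show ?thesis .
qed

lemma Dfin_eq_walk_scale:
  assumes "m \<le> n"
  shows "Dfin p m n = walk_scale p m n"
proof (cases "n = m")
  case False
  then obtain t where t: "n - m = Suc t" using assms by (cases "n - m") auto
  have "walk_scale p m n = (\<Sum>j<Suc t. rho_prod p (m + j) / rho_prod p m)"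
    by (simp add: walk_scale_def t)
  also have "\<dots> = 1 + (\<Sum>j<t. rho_prod p (m + Suc j) / rho_prod p m)"
    using rho_prod_pos[of m] by (simp only: sum.lessThan_Suc_shift) simp
  also have "\<dots> = 1 + (\<Sum>j<t. \<Prod>i\<in>{1..Suc j}. rho p (m + i))"
  proof -
    have "rho_prod p (m + Suc j) / rho_prod p m = (\<Prod>i\<in>{1..Suc j}. rho p (m + i))" for j
      using rho_prod_add[of m "Suc j"] rho_prod_pos[of m] by simp
    then show ?thesis by simp
  qed
  also have "\<dots> = Dfin p m n"
    using False by (simp add: Dfin_def t sum.atLeast1_atMost_eq)
  finally show ?thesis ..
qed (simp add: Dfin_def walk_scale_def)

end

section \<open>Exit probabilities\<close>

context birth_death_walk
begin

lemma stopped_expect_exit_above_Suc: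
  assumes "I \<subseteq> {..y}"
  shows "stopped_expect p I (\<lambda>b. if y < b then 1 else 0) (Suc n) a
       = stopped_expect p I (\<lambda>b. if y < b then 1 else 0) n a + p y * stay_prob p I {y} n a"
proof (induction n arbitrary: a)
  case 0
  show ?case
  proof (cases "a \<in> I")
    case True
    then have "a \<le> y" using assms by auto
    then show ?thesis using True by (cases "a = y") (auto simp: stopped_expect_Suc_in step_prob_def)
  qed (simp add: stopped_expect_Suc_out)
next
  case (Suc n)
  show ?case
  proof (cases "a \<in> I")
    case True
    show ?thesis
      unfolding stopped_expect_Suc_in[OF True] stay_prob_Suc_in[OF True] Suc.IH by (simp add: algebra_simps)
  qed (simp add: stopped_expect_Suc_out stay_prob_Suc_out)
qed

lemma sums_exit_above:
  assumes "I \<subseteq> {..y}" "a \<le> y"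
    and lim: "(\<lambda>n. stopped_expect p I (\<lambda>b. if y < b then 1 else 0) n a) \<longlonglongrightarrow> L"
  shows "(\<lambda>j. p y * stay_prob p I {y} j a) sums L"
proof -
  let ?Q = "\<lambda>n. stopped_expect p I (\<lambda>b. if y < b then 1 else 0) n a"
  have "(\<Sum>j<n. p y * stay_prob p I {y} j a) = ?Q n" for n
  proof -
    have "(\<Sum>j<n. p y * stay_prob p I {y} j a) = (\<Sum>j<n. ?Q (Suc j) - ?Q j)"
      using stopped_expect_exit_above_Suc[OF assms(1)] by simp
    also have "\<dots> = ?Q n - ?Q 0"
      by (rule sum_lessThan_telescope)
    finally show ?thesis using assms(2) by simp
  qed
  then show ?thesis using lim by (simp add: sums_def)
qed

text \<open>From a \<le> x the walk leaves {..x} almost surely, and only through the step x \<rightarrow> x + 1.\<close>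

lemma last_exit_sums:
  assumes "a \<le> x"
  shows "(\<lambda>k. p x * stay_prob p {..x} {x} k a) sums 1"
proof (rule sums_exit_above)
  have "stopped_expect p {..x} (\<lambda>b. if x < b then 1 else 0) n a = 1 - stay_prob p {..x} UNIV n a" for n
  proof -
    have "1 = stopped_expect p {..x} (\<lambda>_. 1) n a"
      by (rule stopped_expect_harmonic[symmetric]) (simp add: step_prob_up_down flip: distrib_left)
    also have "\<dots> = (\<Sum>b\<in>{..x}. 1 * stay_prob p {..x} {b} n a)
        + stopped_expect p {..x} (\<lambda>b. if b \<in> {..x} then 0 else 1) n a"
      by (rule stopped_expect_decompose) simp
    also have "(\<lambda>b. if b \<in> {..x} then 0 else 1) = (\<lambda>b. if x < b then 1 else (0::real))"
      by (auto intro!: ext)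
    finally show ?thesis by (simp add: sum_stay_prob_singletons)
  qed
  moreover have "(\<lambda>n. 1 - stay_prob p {..x} UNIV n a) \<longlonglongrightarrow> 1 - 0"
    by (intro tendsto_diff tendsto_const stay_prob_atMost_tendsto_0)
  ultimately show "(\<lambda>n. stopped_expect p {..x} (\<lambda>b. if x < b then 1 else 0) n a) \<longlonglongrightarrow> 1"
    by simp
qed (use assms in auto)

text \<open>Optional stopping for the harmonic function walk_scale p (x - 1), frozen above y + 1.\<close>

lemma exit_top_sums:
  assumes "1 \<le> x" "x < y"
  shows "(\<lambda>j. p y * stay_prob p {x..y} {y} j (Suc x)) sums (walk_scale p (x - 1) (Suc x) / walk_scale p (x - 1) (Suc y))"
proof (rule sums_exit_above)
  let ?m = "x - 1" and ?I = "{x..y}"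
  let ?G = "\<lambda>b. walk_scale p ?m (min b (Suc y))"
  let ?Q = "\<lambda>n. stopped_expect p ?I (\<lambda>b. if y < b then 1 else 0) n (Suc x)"
  let ?Z = "\<lambda>n. \<Sum>b\<in>?I. ?G b * stay_prob p ?I {b} n (Suc x)"
  have Fy: "0 < walk_scale p ?m (Suc y)" using assms by (intro walk_scale_pos) simp
  have "b \<in> ?I \<Longrightarrow> step_prob p b True * ?G (Suc b) + step_prob p b False * ?G (b - 1) = ?G b" for b
    using walk_scale_harmonic[of ?m b] assms by (auto simp: min_def)
  then have Zid: "walk_scale p ?m (Suc x) = ?Z n + walk_scale p ?m (Suc y) * ?Q n" for n
  proof -
    have "?G (Suc x) = stopped_expect p ?I ?G n (Suc x)"
      by (rule stopped_expect_harmonic[symmetric]) fact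
    also have "\<dots> = ?Z n + stopped_expect p ?I (\<lambda>b. if b \<in> ?I then 0 else ?G b) n (Suc x)"
      by (rule stopped_expect_decompose) simp
    also have "(\<lambda>b. if b \<in> ?I then 0 else ?G b) = (\<lambda>b. walk_scale p ?m (Suc y) * (if y < b then 1 else 0))"
      using assms by (intro ext) (auto simp: walk_scale_eq_0 min_def le_Suc_eq)
    finally show ?thesis
      using assms by (simp add: stopped_expect_cmult)
  qed
  have "?Z \<longlonglongrightarrow> 0"
    by (intro tendsto_null_sum tendsto_mult_right_zero stay_prob_tendsto_0[of _ y]) auto
  then have "(\<lambda>n. (walk_scale p ?m (Suc x) - ?Z n) / walk_scale p ?m (Suc y)) \<longlonglongrightarrow> (walk_scale p ?m (Suc x) - 0) / walk_scale p ?m (Suc y)"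
    using Fy by (intro tendsto_intros) auto
  moreover have "?Q n = (walk_scale p ?m (Suc x) - ?Z n) / walk_scale p ?m (Suc y)" for n
    using Zid[of n] Fy by (simp add: field_simps)
  ultimately show "?Q \<longlonglongrightarrow> walk_scale p ?m (Suc x) / walk_scale p ?m (Suc y)"
    by simp
qed (use assms in auto)

end

section \<open>Transience\<close>

locale transient_birth_death_walk = birth_death_walk +
  assumes D0fin: "convergent (\<lambda>n. Dfin p 0 n)"
begin

lemma summable_rho_prod: "summable (rho_prod p)"
proof -
  have "Dfin p 0 n = (\<Sum>k<n. rho_prod p k)" for n
    using Dfin_eq_walk_scale[of 0 n] by (simp add: walk_scale_def rho_prod_def)
  then show ?thesis using D0fin by (simp add: summable_iff_convergent)
qed

lemma walk_scale_tendsto: "(\<lambda>n. walk_scale p m n) \<longlonglongrightarrow> (\<Sum>j. rho_prod p (j + m)) / rho_prod p m"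
proof -
  have "(\<lambda>t. \<Sum>j<t. rho_prod p (j + m)) \<longlonglongrightarrow> (\<Sum>j. rho_prod p (j + m))"
    by (intro summable_LIMSEQ summable_ignore_initial_segment summable_rho_prod)
  from tendsto_divide[OF this tendsto_const, of "rho_prod p m"]
  have "(\<lambda>t. walk_scale p m (t + m)) \<longlonglongrightarrow> (\<Sum>j. rho_prod p (j + m)) / rho_prod p m"
    using rho_prod_pos[of m] by (simp add: walk_scale_def add.commute sum_divide_distrib)
  then show ?thesis by (rule LIMSEQ_offset)
qed

lemma walk_scale_tendsto_Dinf: "(\<lambda>n. walk_scale p m n) \<longlonglongrightarrow> Dinf p m"
proof -
  have "(\<lambda>n. Dfin p m n) \<longlonglongrightarrow> (\<Sum>j. rho_prod p (j + m)) / rho_prod p m"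
    by (rule Lim_transform_eventually[OF walk_scale_tendsto])
       (use eventually_ge_at_top[of m] in \<open>eventually_elim, simp add: Dfin_eq_walk_scale\<close>)
  then have "Dinf p m = (\<Sum>j. rho_prod p (j + m)) / rho_prod p m"
    unfolding Dinf_def by (rule limI)
  then show ?thesis using walk_scale_tendsto by simp
qed

lemma walk_scale_le_Dinf: "walk_scale p m n \<le> Dinf p m"
  by (rule incseq_le[OF _ walk_scale_tendsto_Dinf]) (auto simp: incseq_def walk_scale_mono)

lemma Dinf_ge_1: "1 \<le> Dinf p m"
  using walk_scale_le_Dinf[of m "Suc m"] by (simp add: walk_scale_Suc_self)

lemma stay_prob_atLeast_lower_bound:
  assumes "1 \<le> x" "x \<le> a"
  shows "walk_scale p (x - 1) a / Dinf p (x - 1) \<le> stay_prob p {x..} UNIV N a"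
proof -
  have D: "0 < Dinf p (x - 1)" using Dinf_ge_1[of "x - 1"] by simp
  have "walk_scale p (x - 1) a = stopped_expect p {x..} (walk_scale p (x - 1)) N a"
    using assms by (intro stopped_expect_harmonic[symmetric] walk_scale_harmonic) auto
  also have "\<dots> \<le> Dinf p (x - 1) * stay_prob p {x..} UNIV N a"
    by (rule stopped_expect_le_stay_prob) (use D in \<open>auto simp: walk_scale_le_Dinf walk_scale_eq_0\<close>)
  finally show ?thesis using D by (simp add: divide_le_eq mult.commute)
qed

lemma stay_prob_atLeast_upper_bound:
  assumes "1 \<le> x" "x \<le> a" "a \<le> h"
  shows "stay_prob p {x..} UNIV N a
      \<le> walk_scale p (x - 1) a / walk_scale p (x - 1) (Suc h) + stay_prob p {x..h} UNIV N a"
proof -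
  let ?S = "walk_scale p (x - 1)"
  let ?exit = "stopped_expect p {x..h} (\<lambda>b. if h < b then 1 else 0) N a"
  have "?S (Suc h) * ?exit = stopped_expect p {x..h} (\<lambda>b. ?S (Suc h) * (if h < b then 1 else 0)) N a"
    by (simp add: stopped_expect_cmult)
  also have "\<dots> \<le> stopped_expect p {x..h} ?S N a"
    by (rule stopped_expect_mono) (auto intro: walk_scale_mono walk_scale_nonneg)
  also have "\<dots> = ?S a"
    using assms by (intro stopped_expect_harmonic walk_scale_harmonic) auto
  finally have "?exit \<le> ?S a / ?S (Suc h)"
    using assms walk_scale_pos[of "x - 1" "Suc h"] by (simp add: le_divide_eq mult.commute)
  moreover have "stay_prob p {x..} UNIV N a \<le> ?exit + stay_prob p {x..h} UNIV N a"
    by (rule stay_prob_atLeast_le_exit) (use assms in auto)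
  ultimately show ?thesis by linarith
qed

lemma stay_above_tendsto:
  assumes x: "1 \<le> x" "x \<le> a"
  shows "(\<lambda>N. stay_prob p {x..} UNIV N a) \<longlonglongrightarrow> walk_scale p (x - 1) a / Dinf p (x - 1)"
proof -
  let ?S = "\<lambda>N. stay_prob p {x..} UNIV N a"
  let ?r = "\<lambda>h. walk_scale p (x - 1) a / walk_scale p (x - 1) (Suc h)"
  have "decseq ?S" by (rule decseq_SucI) (rule stay_prob_Suc_le)
  then obtain L where L: "?S \<longlonglongrightarrow> L"
  proof (rule decseq_convergent)
    show "\<forall>N. 0 \<le> ?S N" by (simp add: stay_prob_nonneg)
  qed (rule that)
  have upper: "L \<le> ?r h" if "a \<le> h" for h
  proof -
    have "(\<lambda>N. ?r h + stay_prob p {x..h} UNIV N a) \<longlonglongrightarrow> ?r h + 0"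
      by (intro tendsto_intros stay_prob_tendsto_0[of _ h]) auto
    from LIMSEQ_le[OF L this] show ?thesis
      using stay_prob_atLeast_upper_bound[OF x that] by simp
  qed
  have "?r \<longlonglongrightarrow> walk_scale p (x - 1) a / Dinf p (x - 1)"
    using Dinf_ge_1[of "x - 1"] by (intro tendsto_intros LIMSEQ_Suc[OF walk_scale_tendsto_Dinf]) auto
  then have "L \<le> walk_scale p (x - 1) a / Dinf p (x - 1)"
    by (rule LIMSEQ_le_const) (use upper in \<open>auto intro: exI[of _ a]\<close>)
  moreover have "walk_scale p (x - 1) a / Dinf p (x - 1) \<le> L"
    by (rule LIMSEQ_le_const[OF L]) (use stay_prob_atLeast_lower_bound[OF x] in auto)
  ultimately show ?thesis using L by simp
qed

lemma cutpoint_pair_formula: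
  assumes "1 \<le> x" "x < y"
  shows "walk_scale p (x - 1) (Suc x) / walk_scale p (x - 1) (Suc y) * (1 / (p y * Dinf p (y - 1)))
       = 1 / (p x * Dfin p (x - 1) y) * (1 / (1 - qq p y * Dfin p (x - 1) (y - 1) / Dfin p (x - 1) y))
         * (1 / Dinf p (y - 1))"
proof -
  let ?S = "walk_scale p (x - 1)"
  have Sy: "0 < ?S y" and SSy: "0 < ?S (Suc y)" using assms by (simp_all add: walk_scale_pos)
  have "p y * ?S (Suc y) + qq p y * ?S (y - 1) = ?S y"
    using walk_scale_harmonic[of "x - 1" y] assms by (simp add: step_prob_def)
  then have r: "1 - qq p y * ?S (y - 1) / ?S y = p y * ?S (Suc y) / ?S y"
    using Sy by (simp add: field_simps)
  have e: "Dfin p (x - 1) y = ?S y" "Dfin p (x - 1) (y - 1) = ?S (y - 1)"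
    using assms by (simp_all add: Dfin_eq_walk_scale)
  have hx: "?S (Suc x) = 1 / p x"
    using assms walk_scale_Suc_Suc_self[of "x - 1"] by simp
  show ?thesis
    unfolding e hx r using Sy SSy p_pos[of x] p_pos[of y] Dinf_ge_1[of "y - 1"] by (simp add: field_simps)
qed

end

section \<open>Path events of the chain\<close>

lemma trans_prob_walk_step: "trans_prob p a (walk_step a b) = step_prob p a b"
  by (cases b) (auto simp: trans_prob_def walk_step_def step_prob_def)

lemma path_prob_walk_pos: "path_prob p (map (walk_pos a bs) [0..<Suc (length bs)]) = walk_weight p a bs"
proof -
  have "path_prob p (map (walk_pos a bs) [0..<Suc (length bs)])
      = (\<Prod>i<length bs. trans_prob p (walk_pos a bs i) (walk_pos a bs (Suc i)))"
    unfolding path_prob_def by (intro prod.cong) (auto simp: nth_map_upt simp del: upt_Suc)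
  also have "\<dots> = (\<Prod>i<length bs. step_prob p (walk_pos a bs i) (bs ! i))"
    by (intro prod.cong) (auto simp: walk_pos_Suc trans_prob_walk_step)
  finally show ?thesis by (simp add: walk_weight_eq_prod)
qed

locale birth_death_chain = transient_birth_death_walk +
  fixes M :: "'a measure" and X :: "nat \<Rightarrow> 'a \<Rightarrow> nat"
  assumes chain: "is_bd_chain M X p"
begin

sublocale prob_space M
  using chain by (simp add: is_bd_chain_def)

lemma measurable_X [measurable]: "X k \<in> measurable M (count_space UNIV)"
  using chain by (simp add: is_bd_chain_def)

lemma measure_cylinder:
  "xs \<noteq> [] \<Longrightarrow> measure M {\<omega> \<in> space M. \<forall>i < length xs. X i \<omega> = xs ! i}
     = (if xs ! 0 = 0 then path_prob p xs else 0)"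
  using chain by (simp add: is_bd_chain_def)

lemma cylinder_sets: "{\<omega> \<in> space M. \<forall>i\<le>n. X i \<omega> = c i} \<in> sets M"
  by measurable

definition path_event :: "((nat \<Rightarrow> nat) \<Rightarrow> bool) \<Rightarrow> 'a set" where
  "path_event \<Phi> = {\<omega> \<in> space M. \<Phi> (\<lambda>i. X i \<omega>)}"

definition walk_cyl :: "bool list \<Rightarrow> 'a set" where
  "walk_cyl bs = {\<omega> \<in> space M. \<forall>i\<le>length bs. X i \<omega> = walk_pos 0 bs i}"

lemma path_event_sets:
  assumes dep: "\<And>f g. \<forall>i\<le>n. f i = g i \<Longrightarrow> \<Phi> f = \<Phi> g"
  shows "path_event \<Phi> \<in> sets M"
proof -
  let ?L = "{xs :: nat list. length xs = Suc n \<and> \<Phi> (\<lambda>i. xs ! min i n)}"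
  have "path_event \<Phi> = (\<Union>xs\<in>?L. {\<omega> \<in> space M. \<forall>i\<le>n. X i \<omega> = xs ! i})"
  proof (intro equalityI subsetI)
    fix \<omega> assume \<omega>: "\<omega> \<in> path_event \<Phi>"
    let ?xs = "map (\<lambda>i. X i \<omega>) [0..<Suc n]"
    have "\<Phi> (\<lambda>i. ?xs ! min i n) = \<Phi> (\<lambda>i. X i \<omega>)"
      by (rule dep) (auto simp: nth_map_upt min_def simp del: upt_Suc)
    then have "\<Phi> (\<lambda>i. ?xs ! min i n)" using \<omega> unfolding path_event_def by blast
    then have "?xs \<in> ?L" by simp
    moreover have "\<omega> \<in> {\<omega> \<in> space M. \<forall>i\<le>n. X i \<omega> = ?xs ! i}"
      using \<omega> by (auto simp: path_event_def nth_map_upt simp del: upt_Suc)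
    ultimately show "\<omega> \<in> (\<Union>xs\<in>?L. {\<omega> \<in> space M. \<forall>i\<le>n. X i \<omega> = xs ! i})" by blast
  next
    fix \<omega> assume "\<omega> \<in> (\<Union>xs\<in>?L. {\<omega> \<in> space M. \<forall>i\<le>n. X i \<omega> = xs ! i})"
    then obtain xs where xs: "xs \<in> ?L" "\<omega> \<in> space M" "\<forall>i\<le>n. X i \<omega> = xs ! i" by blast
    have "\<Phi> (\<lambda>i. X i \<omega>) = \<Phi> (\<lambda>i. xs ! min i n)"
      by (rule dep) (use xs in auto)
    then show "\<omega> \<in> path_event \<Phi>" using xs by (simp add: path_event_def)
  qed
  also have "\<dots> \<in> sets M"
    by (rule sets.countable_UN'') (auto intro: cylinder_sets)
  finally show ?thesis .
qed

lemma walk_cyl_sets: "walk_cyl bs \<in> sets M"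
  unfolding walk_cyl_def by (rule cylinder_sets)

lemma measure_walk_cyl: "measure M (walk_cyl bs) = walk_weight p 0 bs"
proof -
  let ?xs = "map (walk_pos 0 bs) [0..<Suc (length bs)]"
  have "walk_cyl bs = {\<omega> \<in> space M. \<forall>i < length ?xs. X i \<omega> = ?xs ! i}"
    by (auto simp: walk_cyl_def nth_map_upt less_Suc_eq_le simp del: upt_Suc)
  then have "measure M (walk_cyl bs) = (if ?xs ! 0 = 0 then path_prob p ?xs else 0)"
    using measure_cylinder[of ?xs] by (simp del: upt_Suc)
  then show ?thesis
    by (simp add: path_prob_walk_pos nth_map_upt del: upt_Suc)
qed

lemma disjoint_walk_cyl: "disjoint_family_on walk_cyl (step_seqs n)"
  unfolding disjoint_family_on_def
proof (intro ballI impI)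
  fix bs cs assume "bs \<in> step_seqs n" "cs \<in> step_seqs n" "bs \<noteq> cs"
  then obtain i where "i \<le> n" "walk_pos 0 bs i \<noteq> walk_pos 0 cs i"
    using walk_pos_inj[of bs cs 0] by (auto simp: step_seqs_def)
  then show "walk_cyl bs \<inter> walk_cyl cs = {}"
    using \<open>bs \<in> step_seqs n\<close> \<open>cs \<in> step_seqs n\<close> by (auto simp: walk_cyl_def step_seqs_def)
qed

lemma measure_UN_walk_cyl:
  "S \<subseteq> step_seqs n \<Longrightarrow> measure M (\<Union>bs\<in>S. walk_cyl bs) = (\<Sum>bs\<in>S. walk_weight p 0 bs)"
  using finite_subset[OF _ finite_step_seqs]
  by (subst finite_measure_finite_Union)
     (auto simp: measure_walk_cyl walk_cyl_sets intro: disjoint_family_on_mono[OF _ disjoint_walk_cyl])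

lemma AE_walk_cyl: "AE \<omega> in M. \<omega> \<in> (\<Union>bs\<in>step_seqs n. walk_cyl bs)"
  by (rule AE_prob_1) (simp add: measure_UN_walk_cyl[of "step_seqs n" n] sum_walk_weight)

lemma measure_path_event:
  assumes dep: "\<And>f g. \<forall>i\<le>n. f i = g i \<Longrightarrow> \<Phi> f = \<Phi> g"
  shows "measure M (path_event \<Phi>) = event_prob p n 0 \<Phi>"
proof -
  let ?S = "{bs \<in> step_seqs n. \<Phi> (walk_pos 0 bs)}"
  have cyl: "\<omega> \<in> walk_cyl bs \<Longrightarrow> bs \<in> step_seqs n \<Longrightarrow> \<Phi> (\<lambda>i. X i \<omega>) = \<Phi> (walk_pos 0 bs)" for \<omega> bs
    by (rule dep) (auto simp: walk_cyl_def step_seqs_def)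
  have "AE \<omega> in M. \<omega> \<in> path_event \<Phi> \<longleftrightarrow> \<omega> \<in> (\<Union>bs\<in>?S. walk_cyl bs)"
    using AE_walk_cyl[of n]
  proof eventually_elim
    case (elim \<omega>)
    then obtain bs where bs: "bs \<in> step_seqs n" "\<omega> \<in> walk_cyl bs" by blast
    show ?case
    proof
      assume "\<omega> \<in> path_event \<Phi>"
      then have "bs \<in> ?S" using bs cyl by (simp add: path_event_def)
      then show "\<omega> \<in> (\<Union>bs\<in>?S. walk_cyl bs)" using bs by blast
    next
      assume "\<omega> \<in> (\<Union>bs\<in>?S. walk_cyl bs)"
      then obtain cs where "cs \<in> ?S" "\<omega> \<in> walk_cyl cs" by blast
      then show "\<omega> \<in> path_event \<Phi>" using cyl by (auto simp: path_event_def walk_cyl_def)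
    qed
  qed
  then have "measure M (path_event \<Phi>) = measure M (\<Union>bs\<in>?S. walk_cyl bs)"
    by (rule measure_eq_AE) (auto intro: path_event_sets[OF dep] walk_cyl_sets)
  also have "\<dots> = (\<Sum>bs\<in>?S. walk_weight p 0 bs)"
    by (rule measure_UN_walk_cyl) auto
  also have "\<dots> = event_prob p n 0 \<Phi>"
    by (auto simp: event_prob_def sum.inter_filter intro!: sum.cong)
  finally show ?thesis .
qed

lemma AE_unit_steps: "AE \<omega> in M. \<forall>k. X (Suc k) \<omega> = Suc (X k \<omega>) \<or> X (Suc k) \<omega> = X k \<omega> - 1"
proof (rule AE_all_countable[THEN iffD2], intro allI)
  fix k
  show "AE \<omega> in M. X (Suc k) \<omega> = Suc (X k \<omega>) \<or> X (Suc k) \<omega> = X k \<omega> - 1"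
    using AE_walk_cyl[of "Suc k"]
  proof eventually_elim
    case (elim \<omega>)
    then obtain bs where "length bs = Suc k" "\<forall>i\<le>Suc k. X i \<omega> = walk_pos 0 bs i"
      by (auto simp: walk_cyl_def step_seqs_def)
    then show ?case by (auto simp: walk_pos_Suc walk_step_def)
  qed
qed

end

section \<open>Weak cutpoints\<close>

definition up_cut :: "nat \<Rightarrow> nat \<Rightarrow> (nat \<Rightarrow> nat) \<Rightarrow> bool" where
  "up_cut x k f \<longleftrightarrow> (\<forall>i\<le>k. f i \<le> x) \<and> f k = x \<and> f (Suc k) = Suc x \<and> (\<forall>i>k. x \<le> f i)"

text \<open>x \<ge> 1 is needed: with truncated subtraction a down step at 0 reads as staying at 0.\<close>

lemma weak_cutpoint_iff_up_cut:
  assumes steps: "\<forall>k. X (Suc k) \<omega> = Suc (X k \<omega>) \<or> X (Suc k) \<omega> = X k \<omega> - 1" and "1 \<le> x"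
  shows "weak_cutpoint X x \<omega> \<longleftrightarrow> (\<exists>k. up_cut x k (\<lambda>i. X i \<omega>))"
proof
  assume "weak_cutpoint X x \<omega>"
  then obtain k where k: "X k \<omega> = x" "\<forall>i<k. X i \<omega> \<le> x" "\<forall>i>k. x \<le> X i \<omega>"
    by (auto simp: weak_cutpoint_def)
  have "X (Suc k) \<omega> = Suc x"
    using steps[rule_format, of k] k(1) k(3)[rule_format, of "Suc k"] \<open>1 \<le> x\<close> by auto
  then have "up_cut x k (\<lambda>i. X i \<omega>)"
    using k by (auto simp: up_cut_def le_less)
  then show "\<exists>k. up_cut x k (\<lambda>i. X i \<omega>)" ..
qed (auto simp: up_cut_def weak_cutpoint_def)

lemma up_cut_not_less: "up_cut x k f \<Longrightarrow> up_cut x k' f \<Longrightarrow> \<not> k < k'"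
  unfolding up_cut_def by (metis Suc_leI Suc_n_not_le_n)

lemma up_cut_unique: "up_cut x k f \<Longrightarrow> up_cut x k' f \<Longrightarrow> k = k'"
  using up_cut_not_less by (metis linorder_neqE_nat)

lemma up_cut_pair_less: "x < y \<Longrightarrow> up_cut x k f \<Longrightarrow> up_cut y k' f \<Longrightarrow> k < k'"
  by (rule ccontr) (auto simp: up_cut_def not_less)

lemma weak_cutpoint_pair_iff_up_cut:
  assumes steps: "\<forall>k. X (Suc k) \<omega> = Suc (X k \<omega>) \<or> X (Suc k) \<omega> = X k \<omega> - 1" and "1 \<le> x" "x < y"
  shows "weak_cutpoint X x \<omega> \<and> weak_cutpoint X y \<omega>
      \<longleftrightarrow> (\<exists>k j. up_cut x k (\<lambda>i. X i \<omega>) \<and> up_cut y (Suc k + j) (\<lambda>i. X i \<omega>))"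
proof -
  let ?f = "\<lambda>i. X i \<omega>"
  have "(\<exists>k. up_cut x k ?f) \<and> (\<exists>k'. up_cut y k' ?f) \<longleftrightarrow> (\<exists>k j. up_cut x k ?f \<and> up_cut y (Suc k + j) ?f)"
  proof
    assume "(\<exists>k. up_cut x k ?f) \<and> (\<exists>k'. up_cut y k' ?f)"
    then obtain k k' where k: "up_cut x k ?f" "up_cut y k' ?f" by blast
    then obtain j where "k' = Suc (k + j)"
      using less_imp_Suc_add[OF up_cut_pair_less[OF \<open>x < y\<close> k]] by blast
    then show "\<exists>k j. up_cut x k ?f \<and> up_cut y (Suc k + j) ?f" using k by auto
  qed blast
  then show ?thesis
    using assms by (simp add: weak_cutpoint_iff_up_cut[where X = X and \<omega> = \<omega>, OF steps])
qed

lemma up_cut_iff_stay_above: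
  "up_cut x k f \<longleftrightarrow> ((\<forall>i\<le>k. f i \<in> {..x}) \<and> f k = x \<and> f (Suc k) = Suc x) \<and> (\<forall>i. x \<le> f (Suc k + i))"
  unfolding up_cut_def by (auto dest: less_imp_Suc_add)

lemma up_cut_pair_iff_stay_above:
  assumes "x < y"
  shows "up_cut x k f \<and> up_cut y (Suc k + j) f \<longleftrightarrow>
    (((\<forall>i\<le>k. f i \<in> {..x}) \<and> f k = x \<and> f (Suc k) = Suc x)
      \<and> (\<lambda>g. (\<forall>i\<le>j. g i \<in> {x..y}) \<and> g j = y \<and> g (Suc j) = Suc y) (\<lambda>i. f (Suc k + i)))
    \<and> (\<forall>i. y \<le> f (Suc k + Suc j + i))"
    (is "?L \<longleftrightarrow> ?R")
proof
  assume ?L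
  then show ?R using assms
    by (auto simp: up_cut_def)
next
  assume R: ?R
  have mid: "x \<le> f i \<and> f i \<le> y" if "k < i" "i \<le> Suc k + j" for i
  proof -
    obtain d where "i = Suc k + d" using less_imp_Suc_add[OF \<open>k < i\<close>] by auto
    then show ?thesis using R that by auto
  qed
  have above: "y \<le> f i" if lt: "Suc k + j < i" for i
  proof -
    obtain d where "i = Suc (Suc k + j + d)" using less_imp_Suc_add[OF lt] by blast
    then have "i = Suc k + Suc j + d" by simp
    then show ?thesis using R by simp
  qed
  show ?L
    unfolding up_cut_def
  proof (intro conjI allI impI)
    show "x \<le> f i" if "k < i" for i
      using mid[OF that] above[of i] assms by (cases "i \<le> Suc k + j") auto
    show "f i \<le> y" if "i \<le> Suc k + j" for i
      using mid[OF _ that] R assms by (cases "i \<le> k") auto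
    show "y \<le> f i" if "Suc k + j < i" for i
      using above[OF that] .
  qed (use R in auto)
qed

context birth_death_chain
begin

lemma measure_then_stay_above:
  assumes dep: "\<And>f g. \<forall>i\<le>n. f i = g i \<Longrightarrow> \<Phi> f = \<Phi> g"
    and pos: "\<And>f. \<Phi> f \<Longrightarrow> f n = c"
    and x: "1 \<le> x" "x \<le> c"
  shows "path_event (\<lambda>f. \<Phi> f \<and> (\<forall>i. x \<le> f (n + i))) \<in> sets M"
    and "measure M (path_event (\<lambda>f. \<Phi> f \<and> (\<forall>i. x \<le> f (n + i))))
           = event_prob p n 0 \<Phi> * (walk_scale p (x - 1) c / Dinf p (x - 1))"
proof -
  define E where "E N = path_event (\<lambda>f. \<Phi> f \<and> (\<forall>i\<le>N. f (n + i) \<in> {x..}))" for N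
  have dep_E: "\<forall>i\<le>n + N. f i = g i \<Longrightarrow>
      (\<Phi> f \<and> (\<forall>i\<le>N. f (n + i) \<in> {x..})) = (\<Phi> g \<and> (\<forall>i\<le>N. g (n + i) \<in> {x..}))" for f g N
    using dep[of f g] by auto
  have E_sets: "E N \<in> sets M" for N
    unfolding E_def by (rule path_event_sets[OF dep_E])
  have "measure M (E N) = event_prob p (n + N) 0 (\<lambda>f. \<Phi> f \<and> (\<forall>i\<le>N. f (n + i) \<in> {x..}))" for N
    unfolding E_def by (rule measure_path_event[OF dep_E])
  also have "\<dots> N = event_prob p n 0 \<Phi> * event_prob p N c (\<lambda>g. \<forall>i\<le>N. g i \<in> {x..})" for N
    by (rule event_prob_concat[where \<Psi> = "\<lambda>g. \<forall>i\<le>N. g i \<in> {x..}", OF dep pos])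
  also have "\<dots> N = event_prob p n 0 \<Phi> * stay_prob p {x..} UNIV N c" for N
    by (simp only: event_prob_stay_UNIV)
  finally have E_measure: "measure M (E N) = event_prob p n 0 \<Phi> * stay_prob p {x..} UNIV N c" for N .
  have INT: "path_event (\<lambda>f. \<Phi> f \<and> (\<forall>i. x \<le> f (n + i))) = (\<Inter>N. E N)"
    by (auto simp: E_def path_event_def)
  show "path_event (\<lambda>f. \<Phi> f \<and> (\<forall>i. x \<le> f (n + i))) \<in> sets M"
    unfolding INT by (rule sets.countable_INT) (auto intro: E_sets)
  have "(\<lambda>N. measure M (E N)) \<longlonglongrightarrow> measure M (\<Inter>N. E N)"
  proof (rule finite_Lim_measure_decseq)
    show "range E \<subseteq> sets M" using E_sets by auto
    show "decseq E" by (auto simp: decseq_def E_def path_event_def)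
  qed
  moreover have "(\<lambda>N. measure M (E N)) \<longlonglongrightarrow> event_prob p n 0 \<Phi> * (walk_scale p (x - 1) c / Dinf p (x - 1))"
    unfolding E_measure by (intro tendsto_mult_left stay_above_tendsto x)
  ultimately show "measure M (path_event (\<lambda>f. \<Phi> f \<and> (\<forall>i. x \<le> f (n + i))))
      = event_prob p n 0 \<Phi> * (walk_scale p (x - 1) c / Dinf p (x - 1))"
    unfolding INT by (rule LIMSEQ_unique)
qed

lemma path_event_up_cut:
  assumes "1 \<le> x"
  shows "path_event (up_cut x k) \<in> sets M"
    and "measure M (path_event (up_cut x k)) = p x * stay_prob p {..x} {x} k 0 * (1 / (p x * Dinf p (x - 1)))"
proof -
  have eq: "up_cut x k = (\<lambda>f. ((\<forall>i\<le>k. f i \<in> {..x}) \<and> f k = x \<and> f (Suc k) = Suc x) \<and> (\<forall>i. x \<le> f (Suc k + i)))"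
    by (intro ext up_cut_iff_stay_above)
  show "path_event (up_cut x k) \<in> sets M"
    unfolding eq by (rule measure_then_stay_above(1)) (use assms in auto)
  have "measure M (path_event (up_cut x k))
      = event_prob p (Suc k) 0 (\<lambda>f. (\<forall>i\<le>k. f i \<in> {..x}) \<and> f k = x \<and> f (Suc k) = Suc x)
        * (walk_scale p (x - 1) (Suc x) / Dinf p (x - 1))"
    unfolding eq by (rule measure_then_stay_above(2)) (use assms in auto)
  also have "event_prob p (Suc k) 0 (\<lambda>f. (\<forall>i\<le>k. f i \<in> {..x}) \<and> f k = x \<and> f (Suc k) = Suc x)
      = stay_prob p {..x} {x} k 0 * p x"
    by (rule event_prob_leaves_up)
  also have "walk_scale p (x - 1) (Suc x) = 1 / p x"
    using assms walk_scale_Suc_Suc_self[of "x - 1"] by simp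
  finally show "measure M (path_event (up_cut x k)) = p x * stay_prob p {..x} {x} k 0 * (1 / (p x * Dinf p (x - 1)))"
    by simp
qed

lemma path_event_up_cut_pair:
  assumes "1 \<le> x" "x < y"
  shows "path_event (\<lambda>f. up_cut x k f \<and> up_cut y (Suc k + j) f) \<in> sets M"
    and "measure M (path_event (\<lambda>f. up_cut x k f \<and> up_cut y (Suc k + j) f))
       = p x * stay_prob p {..x} {x} k 0 * (p y * stay_prob p {x..y} {y} j (Suc x)) * (1 / (p y * Dinf p (y - 1)))"
proof -
  let ?\<Phi> = "\<lambda>f. (\<forall>i\<le>k. f i \<in> {..x}) \<and> f k = x \<and> f (Suc k) = Suc x"
  let ?\<Psi> = "\<lambda>g. (\<forall>i\<le>j. g i \<in> {x..y}) \<and> g j = y \<and> g (Suc j) = Suc y"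
  have eq: "(\<lambda>f. up_cut x k f \<and> up_cut y (Suc k + j) f)
      = (\<lambda>f. (?\<Phi> f \<and> ?\<Psi> (\<lambda>i. f (Suc k + i))) \<and> (\<forall>i. y \<le> f (Suc k + Suc j + i)))"
    using assms by (intro ext up_cut_pair_iff_stay_above)
  have dep: "\<forall>i\<le>Suc k + Suc j. f i = g i \<Longrightarrow>
      (?\<Phi> f \<and> ?\<Psi> (\<lambda>i. f (Suc k + i))) = (?\<Phi> g \<and> ?\<Psi> (\<lambda>i. g (Suc k + i)))" for f g
    by auto
  have pos: "?\<Phi> f \<and> ?\<Psi> (\<lambda>i. f (Suc k + i)) \<Longrightarrow> f (Suc k + Suc j) = Suc y" for f
    by simp
  show "path_event (\<lambda>f. up_cut x k f \<and> up_cut y (Suc k + j) f) \<in> sets M"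
    unfolding eq by (rule measure_then_stay_above(1)[OF dep pos]) (use assms in auto)
  have "measure M (path_event (\<lambda>f. up_cut x k f \<and> up_cut y (Suc k + j) f))
      = event_prob p (Suc k + Suc j) 0 (\<lambda>f. ?\<Phi> f \<and> ?\<Psi> (\<lambda>i. f (Suc k + i)))
        * (walk_scale p (y - 1) (Suc y) / Dinf p (y - 1))"
    unfolding eq by (rule measure_then_stay_above(2)[OF dep pos]) (use assms in auto)
  also have "event_prob p (Suc k + Suc j) 0 (\<lambda>f. ?\<Phi> f \<and> ?\<Psi> (\<lambda>i. f (Suc k + i)))
      = event_prob p (Suc k) 0 ?\<Phi> * event_prob p (Suc j) (Suc x) ?\<Psi>"
    by (rule event_prob_concat) auto
  also have "event_prob p (Suc k) 0 ?\<Phi> = stay_prob p {..x} {x} k 0 * p x"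
    by (rule event_prob_leaves_up)
  also have "event_prob p (Suc j) (Suc x) ?\<Psi> = stay_prob p {x..y} {y} j (Suc x) * p y"
    by (rule event_prob_leaves_up)
  also have "walk_scale p (y - 1) (Suc y) = 1 / p y"
    using assms walk_scale_Suc_Suc_self[of "y - 1"] by simp
  finally show "measure M (path_event (\<lambda>f. up_cut x k f \<and> up_cut y (Suc k + j) f))
      = p x * stay_prob p {..x} {x} k 0 * (p y * stay_prob p {x..y} {y} j (Suc x)) * (1 / (p y * Dinf p (y - 1)))"
    by simp
qed

lemma prob_weak_cutpoint:
  assumes "1 \<le> x"
  shows "measure M {\<omega> \<in> space M. weak_cutpoint X x \<omega>} = 1 / (p x * Dinf p (x - 1))"
proof -
  let ?C = "\<lambda>k. path_event (up_cut x k)"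
  have C_sets: "?C k \<in> sets M" for k
    by (rule path_event_up_cut(1)[OF assms])
  have "AE \<omega> in M. \<omega> \<in> {\<omega> \<in> space M. weak_cutpoint X x \<omega>} \<longleftrightarrow> \<omega> \<in> (\<Union>k. ?C k)"
    using AE_unit_steps
  proof eventually_elim
    case (elim \<omega>)
    then show ?case
      using weak_cutpoint_iff_up_cut[where X = X and \<omega> = \<omega>, OF elim assms] by (auto simp: path_event_def)
  qed
  then have "measure M {\<omega> \<in> space M. weak_cutpoint X x \<omega>} = measure M (\<Union>k. ?C k)"
  proof (rule measure_eq_AE)
    show "{\<omega> \<in> space M. weak_cutpoint X x \<omega>} \<in> sets M"
      unfolding weak_cutpoint_def by measurable
    show "(\<Union>k. ?C k) \<in> sets M"
      using C_sets by (intro sets.countable_UN) auto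
  qed
  also have "\<dots> = 1 / (p x * Dinf p (x - 1))"
  proof (rule sums_unique2)
    show "(\<lambda>k. measure M (?C k)) sums measure M (\<Union>k. ?C k)"
    proof (rule finite_measure_UNION)
      show "range ?C \<subseteq> sets M" using C_sets by blast
      show "disjoint_family ?C" by (auto simp: disjoint_family_on_def path_event_def dest: up_cut_unique)
    qed
    show "(\<lambda>k. measure M (?C k)) sums (1 / (p x * Dinf p (x - 1)))"
      using sums_mult2[OF last_exit_sums[of 0 x], of "1 / (p x * Dinf p (x - 1))"]
      unfolding path_event_up_cut(2)[OF assms] by simp
  qed
  finally show ?thesis .
qed

lemma measure_UN_up_cut_pair:
  assumes "1 \<le> x" "x < y"
  shows "measure M (\<Union>j. path_event (\<lambda>f. up_cut x k f \<and> up_cut y (Suc k + j) f))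
    = p x * stay_prob p {..x} {x} k 0
      * (walk_scale p (x - 1) (Suc x) / walk_scale p (x - 1) (Suc y)) * (1 / (p y * Dinf p (y - 1)))"
proof (rule sums_unique2)
  let ?P = "\<lambda>j. path_event (\<lambda>f. up_cut x k f \<and> up_cut y (Suc k + j) f)"
  show "(\<lambda>j. measure M (?P j)) sums measure M (\<Union>j. ?P j)"
  proof (rule finite_measure_UNION)
    show "range ?P \<subseteq> sets M" using path_event_up_cut_pair(1)[OF assms] by blast
    show "disjoint_family ?P" by (auto simp: disjoint_family_on_def path_event_def dest: up_cut_unique)
  qed
  show "(\<lambda>j. measure M (?P j)) sums (p x * stay_prob p {..x} {x} k 0
      * (walk_scale p (x - 1) (Suc x) / walk_scale p (x - 1) (Suc y)) * (1 / (p y * Dinf p (y - 1))))"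
    unfolding path_event_up_cut_pair(2)[OF assms] by (intro sums_mult2 sums_mult exit_top_sums assms)
qed

lemma prob_weak_cutpoint_pair:
  assumes "1 \<le> x" "x < y"
  shows "measure M {\<omega> \<in> space M. weak_cutpoint X x \<omega> \<and> weak_cutpoint X y \<omega>}
     = walk_scale p (x - 1) (Suc x) / walk_scale p (x - 1) (Suc y) * (1 / (p y * Dinf p (y - 1)))"
proof -
  let ?B = "\<lambda>k. \<Union>j. path_event (\<lambda>f. up_cut x k f \<and> up_cut y (Suc k + j) f)"
  let ?G = "walk_scale p (x - 1) (Suc x) / walk_scale p (x - 1) (Suc y)"
  let ?h = "1 / (p y * Dinf p (y - 1))"
  have B_sets: "?B k \<in> sets M" for k
    using path_event_up_cut_pair(1)[OF assms] by (intro sets.countable_UN) auto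
  have "AE \<omega> in M. \<omega> \<in> {\<omega> \<in> space M. weak_cutpoint X x \<omega> \<and> weak_cutpoint X y \<omega>} \<longleftrightarrow> \<omega> \<in> (\<Union>k. ?B k)"
    using AE_unit_steps
  proof eventually_elim
    case (elim \<omega>)
    then show ?case
      using weak_cutpoint_pair_iff_up_cut[where X = X and \<omega> = \<omega>, OF elim assms] by (auto simp: path_event_def)
  qed
  then have "measure M {\<omega> \<in> space M. weak_cutpoint X x \<omega> \<and> weak_cutpoint X y \<omega>} = measure M (\<Union>k. ?B k)"
  proof (rule measure_eq_AE)
    show "{\<omega> \<in> space M. weak_cutpoint X x \<omega> \<and> weak_cutpoint X y \<omega>} \<in> sets M"
      unfolding weak_cutpoint_def by measurable
    show "(\<Union>k. ?B k) \<in> sets M"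
      using B_sets by (intro sets.countable_UN) auto
  qed
  also have "\<dots> = ?G * ?h"
  proof (rule sums_unique2)
    show "(\<lambda>k. measure M (?B k)) sums measure M (\<Union>k. ?B k)"
    proof (rule finite_measure_UNION)
      show "range ?B \<subseteq> sets M" using B_sets by blast
      show "disjoint_family ?B" by (auto simp: disjoint_family_on_def path_event_def dest: up_cut_unique)
    qed
    show "(\<lambda>k. measure M (?B k)) sums (?G * ?h)"
      using sums_mult2[OF sums_mult2[OF last_exit_sums[of 0 x]], of ?G ?h]
      unfolding measure_UN_up_cut_pair[OF assms] by simp
  qed
  finally show ?thesis .
qed
end

theorem lemma7:
  fixes M :: "'a measure" and X :: "nat \<Rightarrow> 'a \<Rightarrow> nat" and p :: "nat \<Rightarrow> real"
  assumes p0: "p 0 = 1"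
    and ppos: "\<And>k. k \<ge> 1 \<Longrightarrow> 0 < p k \<and> p k < 1"
    and chain: "is_bd_chain M X p"
    and D0fin: "convergent (\<lambda>n. Dfin p 0 n)"
  shows "(\<forall>x::nat. x \<ge> 1 \<longrightarrow>
            measure M {\<omega> \<in> space M. weak_cutpoint X x \<omega>}
              = 1 / (p x * Dinf p (x - 1)))
       \<and> (\<forall>x y::nat. 1 \<le> x \<and> x < y \<longrightarrow>
            measure M {\<omega> \<in> space M. weak_cutpoint X x \<omega> \<and> weak_cutpoint X y \<omega>}
              = 1 / (p x * Dfin p (x - 1) y)
                * (1 / (1 - qq p y * Dfin p (x - 1) (y - 1) / Dfin p (x - 1) y))
                * (1 / Dinf p (y - 1)))"
proof -
  interpret birth_death_chain p M X
    using p0 ppos D0fin chain by unfold_locales auto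
  show ?thesis
  proof (intro conjI allI impI)
    fix x :: nat
    assume "x \<ge> 1"
    then show "measure M {\<omega> \<in> space M. weak_cutpoint X x \<omega>} = 1 / (p x * Dinf p (x - 1))"
      by (rule prob_weak_cutpoint)
  next
    fix x y :: nat
    assume "1 \<le> x \<and> x < y"
    then have xy: "1 \<le> x" "x < y" by auto
    show "measure M {\<omega> \<in> space M. weak_cutpoint X x \<omega> \<and> weak_cutpoint X y \<omega>}
        = 1 / (p x * Dfin p (x - 1) y) * (1 / (1 - qq p y * Dfin p (x - 1) (y - 1) / Dfin p (x - 1) y))
          * (1 / Dinf p (y - 1))"
      by (rule trans[OF prob_weak_cutpoint_pair[OF xy] cutpoint_pair_formula[OF xy]])
  qed
qed

end
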